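(* With notation as in the context, let $V$ be a finite-dimensional $K$-vector space with a $K$-linear automorphism $[1]:V\to V$ (i.e. a finite-dimensional $K$-linear representation of $\mathbb{Z}$). Consider the $E_A$-module $V\otimes_KE_A$ with the $\sigma$-semilinear automorphism $[1](v\otimes x)=[1](v)\otimes\sigma(x)$. Then $V\otimes_KE_A$ is trivial, i.e. it has an $E_A$-basis $b''_1,\dots,b''_n$ with $[1](b''_i)=b''_i$ for all $i$; equivalently, it is isomorphic, $E_A$-linearly and compatibly with the actions, to $E_A^n$ with the action of $\sigma$ componentwise.
   Context: $K$ is an algebraically closed field of characteristic $0$. $K[t^K]$ is the group algebra over $K$ of $(K,+)$, with $K$-basis $t^a$ ($a\in K$), $t^at^b=t^{a+b}$; $K[t,t^{-1}]$ is identified with the span of $t^n$, $n\in\mathbb{Z}$. Fix a set $\widetilde{K/\mathbb{Z}}\subset K$ of representatives of $K/\mathbb{Z}$ with $0\in\widetilde{K/\mathbb{Z}}$. $A$ is a commutative ring with unit containing $K[t,t^{-1}]$ as a subring, with a derivation $\partial:A\to A$ extending $t\frac{d}{dt}$ on $K[t,t^{-1}]$. $A[t^K]:=A\otimes_{K[t,t^{-1}]}K[t^K]$ and $E_A:=A[t^K][\ell]$ with $\ell$ an indeterminate. Fix a group isomorphism $\overline{\gamma}:K/\mathbb{Z}\to K^\times$ and set $\gamma:=\overline{\gamma}\circ\pi:K\to K^\times$ ($\pi$ the projection). $\sigma$ is the unique ring automorphism of $E_A$ with $\sigma(f)=f$ for $f\in A$, $\sigma(t^a)=\gamma(a)t^a$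 for $a\in K$, $\sigma(\ell)=\ell+1$. *)

theory Defs
  imports "HOL-Computational_Algebra.Polynomial" "Jordan_Normal_Form.Matrix"
begin

definition alg_closed :: "'k::field itself \<Rightarrow> bool" where
  "alg_closed _ \<longleftrightarrow> (\<forall>p::'k poly. degree p > 0 \<longrightarrow> (\<exists>x. poly p x = 0))"

definition ring_hom_fun :: "('a::comm_ring_1 \<Rightarrow> 'b::comm_ring_1) \<Rightarrow> bool" where
  "ring_hom_fun f \<longleftrightarrow> f 0 = 0 \<and> f 1 = 1 \<and> (\<forall>x y. f (x + y) = f x + f y) \<and>
     (\<forall>x y. f (x * y) = f x * f y)"

text \<open>A contains K[t,t^-1] as a subring: cK embeds K, T is the image of t, T is a unit
  and the induced map K[t,t^-1] -> A is injective (equivalently, since T is a unit,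
  K[t] -> A is injective).\<close>
definition laurent_subring :: "('k::field \<Rightarrow> 'a::comm_ring_1) \<Rightarrow> 'a \<Rightarrow> bool" where
  "laurent_subring cK T \<longleftrightarrow> ring_hom_fun cK \<and> (\<exists>u. T * u = 1) \<and>
     (\<forall>p::'k poly. (\<Sum>i\<le>degree p. cK (coeff p i) * T ^ i) = 0 \<longrightarrow> p = 0)"

text \<open>A derivation of A extending t d/dt on K[t,t^-1].\<close>
definition extends_t_ddt :: "('k::field \<Rightarrow> 'a::comm_ring_1) \<Rightarrow> 'a \<Rightarrow> ('a \<Rightarrow> 'a) \<Rightarrow> bool" where
  "extends_t_ddt cK T D \<longleftrightarrow> (\<forall>x y. D (x + y) = D x + D y) \<and>
     (\<forall>x y. D (x * y) = x * D y + y * D x) \<and> (\<forall>c. D (cK c) = 0) \<and> D T = T"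

definition reps_mod_Z :: "'k::field_char_0 set \<Rightarrow> bool" where
  "reps_mod_Z R \<longleftrightarrow> 0 \<in> R \<and> (\<forall>x. \<exists>!r. r \<in> R \<and> x - r \<in> \<int>)"

text \<open>gamma = gammabar o pi with gammabar : K/Z -> K^* a group isomorphism, i.e.
  gamma is a surjective homomorphism (K,+) -> K^* with kernel exactly Z.\<close>
definition gamma_char :: "('k::field_char_0 \<Rightarrow> 'k) \<Rightarrow> bool" where
  "gamma_char \<gamma> \<longleftrightarrow> (\<forall>a b. \<gamma> (a + b) = \<gamma> a * \<gamma> b) \<and> (\<forall>a. \<gamma> a \<noteq> 0) \<and>
     (\<forall>a. \<gamma> a = 1 \<longleftrightarrow> a \<in> \<int>) \<and> (\<forall>c. c \<noteq> 0 \<longrightarrow> (\<exists>a. \<gamma> a = c))"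

text \<open>The ring E (with structure maps iA : A -> E, tt a = t^a, l = ell) is
  E_A = (A \<otimes>_{K[t,t^-1]} K[t^K])[ell]: iA is a ring map, a \<mapsto> t^a a monoid map
  (K,+) -> (E,*) agreeing with t^n on integers, and E is a free A-module with basis
  t^r ell^k (r \<in> R, k \<in> N); this presents E_A up to unique isomorphism.\<close>
definition EA_pres :: "('k::field_char_0 \<Rightarrow> 'a::comm_ring_1) \<Rightarrow> 'a \<Rightarrow> 'k set \<Rightarrow>
    ('a \<Rightarrow> 'e::comm_ring_1) \<Rightarrow> ('k \<Rightarrow> 'e) \<Rightarrow> 'e \<Rightarrow> bool" where
  "EA_pres cK T R iA tt l \<longleftrightarrow> ring_hom_fun iA \<and> tt 0 = 1 \<and>
     (\<forall>a b. tt (a + b) = tt a * tt b) \<and> (\<forall>n::nat. tt (of_nat n) = iA (T ^ n)) \<and>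
     (\<forall>x. \<exists>!f :: 'k \<times> nat \<Rightarrow> 'a. finite {p. f p \<noteq> 0} \<and> {p. f p \<noteq> 0} \<subseteq> R \<times> UNIV \<and>
        x = (\<Sum>p\<in>{p. f p \<noteq> 0}. iA (f p) * tt (fst p) * l ^ snd p))"

definition sigma_char :: "('k::field_char_0 \<Rightarrow> 'a::comm_ring_1) \<Rightarrow> ('a \<Rightarrow> 'e::comm_ring_1) \<Rightarrow>
    ('k \<Rightarrow> 'e) \<Rightarrow> 'e \<Rightarrow> ('k \<Rightarrow> 'k) \<Rightarrow> ('e \<Rightarrow> 'e) \<Rightarrow> bool" where
  "sigma_char cK iA tt l \<gamma> \<sigma> \<longleftrightarrow> ring_hom_fun \<sigma> \<and> bij \<sigma> \<and> (\<forall>f. \<sigma> (iA f) = iA f) \<and>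
     (\<forall>a. \<sigma> (tt a) = iA (cK (\<gamma> a)) * tt a) \<and> \<sigma> l = l + 1"

definition is_basis_vecs :: "nat \<Rightarrow> 'e::comm_ring_1 vec list \<Rightarrow> bool" where
  "is_basis_vecs n bs \<longleftrightarrow> length bs = n \<and> (\<forall>b\<in>set bs. b \<in> carrier_vec n) \<and>
     (\<forall>y\<in>carrier_vec n. \<exists>!c. c \<in> carrier_vec n \<and> mat_of_cols n bs *\<^sub>v c = y)"

end

theory Submission
  imports Defs "Jordan_Normal_Form.Jordan_Normal_Form_Existence"
begin

text \<open>In coordinates, a basis fixed by [1] is the set of columns of an invertible matrix X over E
  with M \<sigma>(X) = X, i.e. a fundamental matrix of the difference system \<sigma>(X) = M^-1 X.
  Fundamental matrices are transported along similarity and glued along block sums, and since K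
  is algebraically closed, M^-1 is similar to a Jordan matrix; so it suffices to treat a single
  Jordan block J of size m with eigenvalue a \<noteq> 0. Choose c with \<gamma>(c) = a, so that
  \<sigma>(t^c) = a t^c. As \<sigma> acts on the binomial coefficients (\<ell> choose k) by Pascal's rule, the upper
  triangular matrix with entries t^c a^(i-j) (\<ell> choose j-i) solves \<sigma>(X) = J X, and its
  determinant t^(mc) is a unit.\<close>

lemma inverse_mat_of_det_unit:
  fixes A :: "'a::comm_ring_1 mat"
  assumes A: "A \<in> carrier_mat n n" and u: "det A * u = 1"
  shows "\<exists>A' \<in> carrier_mat n n. A * A' = 1\<^sub>m n \<and> A' * A = 1\<^sub>m n"
proof (intro bexI conjI)
  note adj = adj_mat[OF A]
  show "u \<cdot>\<^sub>m adj_mat A \<in> carrier_mat n n" using adj by auto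
  show "A * (u \<cdot>\<^sub>m adj_mat A) = 1\<^sub>m n"
    unfolding mult_smult_distrib[OF A adj(1)] adj(2) using u
    by (intro eq_matI) (auto simp: mult.commute)
  show "u \<cdot>\<^sub>m adj_mat A * A = 1\<^sub>m n"
    unfolding mult_smult_assoc_mat[OF adj(1) A] adj(3) using u
    by (intro eq_matI) (auto simp: mult.commute)
qed

lemma mult_mat_right_inverse:
  fixes A :: "'a::semiring_1 mat"
  assumes A: "A \<in> carrier_mat n n" and A': "A' \<in> carrier_mat n n"
    and B: "B \<in> carrier_mat n n" and B': "B' \<in> carrier_mat n n"
    and "A * A' = 1\<^sub>m n" and "B * B' = 1\<^sub>m n"
  shows "A * B * (B' * A') = 1\<^sub>m n"
proof -
  have "A * B * (B' * A') = A * (B * (B' * A'))"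
    by (rule assoc_mult_mat[OF A B]) (use B' A' in auto)
  also have "\<dots> = A * (B * B' * A')" by (simp add: assoc_mult_mat[OF B B' A'])
  also have "\<dots> = 1\<^sub>m n" using A' assms(5,6) by simp
  finally show ?thesis .
qed

lemma invertible_mat_inverseE:
  assumes M: "M \<in> carrier_mat n n" and inv: "invertible_mat M"
  obtains N where "N \<in> carrier_mat n n" "M * N = 1\<^sub>m n" "N * M = 1\<^sub>m n"
proof -
  from inv obtain N where MN: "M * N = 1\<^sub>m (dim_row M)" and NM: "N * M = 1\<^sub>m (dim_row N)"
    unfolding invertible_mat_def inverts_mat_def by blast
  have "dim_row N = n" using arg_cong[OF NM, of dim_col] M by simp
  moreover have "dim_col N = n" using arg_cong[OF MN, of dim_col] M by simp
  ultimately have N: "N \<in> carrier_mat n n" by (rule carrier_matI)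
  show thesis by (rule that[OF N]) (use MN NM M N in auto)
qed

lemma is_basis_vecs_cols:
  fixes X :: "'a::comm_ring_1 mat"
  assumes X: "X \<in> carrier_mat n n" and Y: "Y \<in> carrier_mat n n"
    and XY: "X * Y = 1\<^sub>m n" and YX: "Y * X = 1\<^sub>m n"
  shows "is_basis_vecs n (cols X)"
  unfolding is_basis_vecs_def
proof (intro conjI ballI)
  show "length (cols X) = n" "\<And>b. b \<in> set (cols X) \<Longrightarrow> b \<in> carrier_vec n"
    using X by (auto simp: cols_def)
  fix y :: "'a vec" assume y: "y \<in> carrier_vec n"
  have X_eq: "mat_of_cols n (cols X) = X" using X mat_of_cols_cols[of X] by auto
  show "\<exists>!c. c \<in> carrier_vec n \<and> mat_of_cols n (cols X) *\<^sub>v c = y" unfolding X_eq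
  proof (intro ex1I[of _ "Y *\<^sub>v y"] conjI)
    show "Y *\<^sub>v y \<in> carrier_vec n" using Y y by auto
    show "X *\<^sub>v (Y *\<^sub>v y) = y" using assoc_mult_mat_vec[OF X Y y, symmetric] XY y by simp
    fix c assume "c \<in> carrier_vec n \<and> X *\<^sub>v c = y"
    then show "c = Y *\<^sub>v y" using assoc_mult_mat_vec[OF Y X, of c] YX by auto
  qed
qed

lemma mult_four_block_diag_mat:
  fixes A1 :: "'a::semiring_0 mat"
  assumes "A1 \<in> carrier_mat n1 n1" "B1 \<in> carrier_mat n1 n1"
    and "A2 \<in> carrier_mat n2 n2" "B2 \<in> carrier_mat n2 n2"
  shows "four_block_mat A1 (0\<^sub>m n1 n2) (0\<^sub>m n2 n1) A2 * four_block_mat B1 (0\<^sub>m n1 n2) (0\<^sub>m n2 n1) B2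
    = four_block_mat (A1 * B1) (0\<^sub>m n1 n2) (0\<^sub>m n2 n1) (A2 * B2)"
proof -
  have "four_block_mat A1 (0\<^sub>m n1 n2) (0\<^sub>m n2 n1) A2 * four_block_mat B1 (0\<^sub>m n1 n2) (0\<^sub>m n2 n1) B2
    = four_block_mat (A1 * B1 + 0\<^sub>m n1 n2 * 0\<^sub>m n2 n1) (A1 * 0\<^sub>m n1 n2 + 0\<^sub>m n1 n2 * B2)
        (0\<^sub>m n2 n1 * B1 + A2 * 0\<^sub>m n2 n1) (0\<^sub>m n2 n1 * 0\<^sub>m n1 n2 + A2 * B2)"
    using assms by (intro mult_four_block_mat) auto
  then show ?thesis using assms by simp
qed

lemma map_zero_mat: "f 0 = 0 \<Longrightarrow> map_mat f (0\<^sub>m nr nc) = 0\<^sub>m nr nc"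
  by (intro eq_matI) auto

lemma map_jordan_block:
  assumes "f 0 = 0" "f 1 = 1"
  shows "map_mat f (jordan_block m a) = jordan_block m (f a)"
  using assms by (intro eq_matI) auto

lemma jordan_block_mult_index:
  fixes Z :: "'a::semiring_1 mat"
  assumes Z: "Z \<in> carrier_mat m m" and i: "i < m" and j: "j < m"
  shows "(jordan_block m a * Z) $$ (i, j) = a * Z $$ (i, j) + (if Suc i < m then Z $$ (Suc i, j) else 0)"
proof -
  have "(jordan_block m a * Z) $$ (i, j) =
    (\<Sum>k = 0..<m. (if i = k then a else if Suc i = k then 1 else 0) * Z $$ (k, j))"
    using Z i j by (simp add: scalar_prod_def)
  also have "\<dots> = (\<Sum>k = 0..<m. (if k = i then a * Z $$ (i, j) else 0)
      + (if k = Suc i then Z $$ (Suc i, j) else 0))"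
    by (rule sum.cong) auto
  finally show ?thesis using i by (simp add: sum.distrib)
qed

lemma invertible_mat_with_first_col:
  fixes v :: "'k::field vec"
  assumes v: "v \<in> carrier_vec n" and v0: "v \<noteq> 0\<^sub>v n"
  obtains W Q where "W \<in> carrier_mat n n" "Q \<in> carrier_mat n n"
    "W * Q = 1\<^sub>m n" "Q * W = 1\<^sub>m n" "col W 0 = v"
proof -
  interpret vec_space "TYPE('k)" n .
  define b where "b = basis_completion v"
  from basis_completion[OF v v0, folded b_def]
  have span_b: "span (set b) = carrier_vec n" and b: "set b \<subseteq> carrier_vec n"
    and hd_b: "hd b = v" and len_b: "length b = n" by auto
  define W where "W = mat_of_cols n b"
  have W: "W \<in> carrier_mat n n" unfolding W_def using len_b by auto
  have "n \<noteq> 0" using v v0 by (intro notI) auto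
  then have col_W: "col W 0 = v" unfolding W_def using hd_b len_b b
    by (cases b) (auto simp: mat_of_cols_Cons_index_0)
  have "\<forall>j. \<exists>c. j < n \<longrightarrow> c \<in> carrier_vec n \<and> W *\<^sub>v c = unit_vec n j"
  proof
    fix j
    show "\<exists>c. j < n \<longrightarrow> c \<in> carrier_vec n \<and> W *\<^sub>v c = unit_vec n j"
    proof (cases "j < n")
      case True
      then have "unit_vec n j \<in> span_list b" using span_b span_list_as_span[OF b] by auto
      then obtain c where "unit_vec n j = lincomb_list c b" by (auto elim: in_span_listE)
      also have "\<dots> = W *\<^sub>v vec (length b) c" unfolding W_def
        by (rule lincomb_list_as_mat_mult) (use b in auto)
      finally show ?thesis using len_b by (intro exI[of _ "vec n c"]) auto
    qed auto
  qed
  from choice[OF this] obtain c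
    where c: "\<And>j. j < n \<Longrightarrow> c j \<in> carrier_vec n \<and> W *\<^sub>v c j = unit_vec n j" by blast
  define Q where "Q = mat n n (\<lambda>(i, j). c j $ i)"
  have Q: "Q \<in> carrier_mat n n" unfolding Q_def by auto
  have col_Q: "col Q j = c j" if "j < n" for j
    unfolding Q_def using that c[OF that] by (intro eq_vecI) auto
  have WQ: "W * Q = 1\<^sub>m n"
  proof (rule eq_matI)
    fix i j assume i: "i < dim_row (1\<^sub>m n)" and j: "j < dim_col (1\<^sub>m n)"
    then have "(W * Q) $$ (i, j) = (W *\<^sub>v col Q j) $ i" using W Q by auto
    also have "\<dots> = unit_vec n j $ i" using col_Q c j by auto
    finally show "(W * Q) $$ (i, j) = 1\<^sub>m n $$ (i, j)" using i j by auto
  qed (use W Q in auto)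
  show thesis by (rule that[OF W Q WQ mat_mult_left_right_inverse[OF W Q WQ] col_W])
qed

lemma similar_mat_eigenvector_first_col:
  fixes A :: "'k::field mat"
  assumes A: "A \<in> carrier_mat n n" and ev: "eigenvector A v e"
  obtains A' where "A' \<in> carrier_mat n n" "similar_mat A A'" "col A' 0 = e \<cdot>\<^sub>v unit_vec n 0"
proof -
  from ev A have v: "v \<in> carrier_vec n" and v0: "v \<noteq> 0\<^sub>v n" and Av: "A *\<^sub>v v = e \<cdot>\<^sub>v v"
    unfolding eigenvector_def by auto
  have n: "0 < n" using v v0 by (cases n) auto
  obtain W Q where W: "W \<in> carrier_mat n n" and Q: "Q \<in> carrier_mat n n"
    and WQ: "W * Q = 1\<^sub>m n" and QW: "Q * W = 1\<^sub>m n" and col_W: "col W 0 = v"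
    using invertible_mat_with_first_col[OF v v0] .
  define A' where "A' = Q * A * W"
  have A': "A' \<in> carrier_mat n n" unfolding A'_def using Q A W by auto
  have QA: "Q * A \<in> carrier_mat n n" using Q A by auto
  have "W * A' * Q = W * (Q * A * (W * Q))"
    unfolding A'_def using W QA by (simp add: assoc_mult_mat[OF _ _ Q])
  also have "\<dots> = (W * Q) * A" using W Q A by (simp add: WQ flip: assoc_mult_mat[OF W Q A])
  finally have "A = W * A' * Q" using A by (simp add: WQ)
  then have "similar_mat_wit A A' W Q"
    using A A' W Q WQ QW by (intro similar_mat_witI[of _ _ n]) auto
  moreover have "col A' 0 = e \<cdot>\<^sub>v unit_vec n 0"
  proof -
    have "col A' 0 = (Q * A) *\<^sub>v v"
      unfolding A'_def col_W[symmetric] by (rule col_mult2[OF QA W n])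
    also have "\<dots> = Q *\<^sub>v (A *\<^sub>v v)" by (rule assoc_mult_mat_vec[OF Q A v])
    also have "\<dots> = e \<cdot>\<^sub>v col (Q * W) 0" using Q W v n
      by (simp add: Av mult_mat_vec col_W)
    finally show ?thesis using n by (simp add: QW)
  qed
  ultimately show thesis using that A' unfolding similar_mat_def by blast
qed

lemma four_block_mat_of_first_col:
  fixes A :: "'a::comm_ring_1 mat"
  assumes A: "A \<in> carrier_mat (Suc m) (Suc m)" and col_A: "col A 0 = e \<cdot>\<^sub>v unit_vec (Suc m) 0"
  shows "A = four_block_mat (mat 1 1 (\<lambda>_. e)) (mat 1 m (\<lambda>(_, j). A $$ (0, Suc j)))
    (0\<^sub>m m 1) (mat m m (\<lambda>(i, j). A $$ (Suc i, Suc j)))"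
proof -
  have "A $$ (i, 0) = (if i = 0 then e else 0)" if "i < Suc m" for i
    using arg_cong[OF col_A, of "\<lambda>w. w $ i"] that A by auto
  then show ?thesis using A
    by (intro eq_matI) (auto simp: four_block_mat_def less_Suc_eq_0_disj)
qed

lemma alg_closed_triangularizable:
  fixes A :: "'k::field mat"
  assumes ac: "alg_closed TYPE('k)" and A: "A \<in> carrier_mat n n"
  shows "\<exists>B. B \<in> carrier_mat n n \<and> upper_triangular B \<and> similar_mat A B"
  using A
proof (induction n arbitrary: A)
  case 0
  then show ?case by (intro exI[of _ A]) (auto simp: upper_triangular_def similar_mat_refl)
next
  case (Suc m A)
  have "degree (char_poly A) = Suc m" using degree_monic_char_poly[OF Suc.prems] by auto
  then obtain e where "poly (char_poly A) e = 0" using ac unfolding alg_closed_def by (metis zero_less_Suc)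
  then obtain v where "eigenvector A v e"
    using eigenvalue_root_char_poly[OF Suc.prems] unfolding eigenvalue_def by auto
  then obtain A' where A': "A' \<in> carrier_mat (Suc m) (Suc m)" and "similar_mat A A'"
    and "col A' 0 = e \<cdot>\<^sub>v unit_vec (Suc m) 0"
    using similar_mat_eigenvector_first_col[OF Suc.prems] by metis
  moreover define E B0 C where "E = mat 1 1 (\<lambda>_. e)"
    and "B0 = mat 1 m (\<lambda>(_, j). A' $$ (0, Suc j))"
    and "C = mat m m (\<lambda>(i, j). A' $$ (Suc i, Suc j))"
  ultimately have A'_eq: "A' = four_block_mat E B0 (0\<^sub>m m 1) C"
    using four_block_mat_of_first_col by blast
  have E: "E \<in> carrier_mat 1 1" and B0: "B0 \<in> carrier_mat 1 m" and C: "C \<in> carrier_mat m m"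
    unfolding E_def B0_def C_def by auto
  obtain D P Q where D: "D \<in> carrier_mat m m" and "upper_triangular D"
    and wit: "similar_mat_wit C D P Q"
    using Suc.IH[OF C] unfolding similar_mat_def by blast
  from similar_mat_witD2[OF C wit] have P: "P \<in> carrier_mat m m" and Q: "Q \<in> carrier_mat m m"
    and PQ: "P * Q = 1\<^sub>m m" by auto
  have "B0 = B0 * P * Q" using B0 by (simp add: assoc_mult_mat[OF B0 P Q] PQ)
  define U where "U = four_block_mat E (B0 * P) (0\<^sub>m m 1) D"
  have "similar_mat_wit A' U (four_block_mat (1\<^sub>m 1) (0\<^sub>m 1 m) (0\<^sub>m m 1) P)
      (four_block_mat (1\<^sub>m 1) (0\<^sub>m 1 m) (0\<^sub>m m 1) Q)"
    unfolding A'_eq U_def using \<open>B0 = B0 * P * Q\<close> B0 P E C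
    by (intro similar_mat_wit_four_block[OF similar_mat_wit_refl[OF E] wit]) auto
  then have "similar_mat A U"
    using \<open>similar_mat A A'\<close> similar_mat_trans unfolding similar_mat_def by blast
  moreover have "upper_triangular U"
    unfolding U_def E_def using D \<open>upper_triangular D\<close>
    by (intro upper_triangular_four_block) (auto simp: upper_triangular_def)
  moreover have "U \<in> carrier_mat (Suc m) (Suc m)" unfolding U_def using E B0 P D by auto
  ultimately show ?case by blast
qed

lemma jordan_nf_eigenvalue_nonzero:
  fixes A :: "'k::field mat"
  assumes A: "A \<in> carrier_mat n n" and det: "det A \<noteq> 0"
    and jnf: "jordan_nf A n_as" and mem: "(m, a) \<in> set n_as"
  shows "a \<noteq> 0"
proof
  assume a: "a = 0"
  have m: "m \<noteq> 0" using jnf mem unfolding jordan_nf_def by force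
  from mem obtain xs ys where "n_as = xs @ (m, a) # ys" by (meson split_list)
  then have "[:- a, 1:] ^ m dvd char_poly A" unfolding jordan_nf_char_poly[OF jnf] by auto
  then have "poly (char_poly A) a = 0"
    using m by (metis dvd_power dvd_trans neq0_conv poly_eq_0_iff_dvd)
  moreover have "char_matrix A 0 = A" using A unfolding char_matrix_def by (intro eq_matI) auto
  ultimately have "det A = 0"
    using eigenvalue_root_char_poly[OF A] eigenvalue_det[OF A] a by metis
  with det show False ..
qed

locale log_difference_ring = H: comm_ring_hom h + S: comm_ring_hom \<sigma>
  for h :: "'k::field_char_0 \<Rightarrow> 'e::comm_ring_1" and \<sigma> :: "'e \<Rightarrow> 'e" +
  fixes l :: 'e
  assumes \<sigma>_h [simp]: "\<sigma> (h c) = h c" and \<sigma>_l: "\<sigma> l = l + 1"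
begin

definition l_choose :: "nat \<Rightarrow> 'e" where
  "l_choose k = h (1 / fact k) * (\<Prod>i<k. l - of_nat i)"

lemma l_choose_0 [simp]: "l_choose 0 = 1"
  by (simp add: l_choose_def)

lemma \<sigma>_l_choose_Suc: "\<sigma> (l_choose (Suc k)) = l_choose (Suc k) + l_choose k"
proof -
  define P where "P = (\<Prod>i<k. l - of_nat i)"
  define c where "c = h (1 / fact (Suc k))"
  have prod_Suc: "(\<Prod>i<Suc k. l - of_nat i) = (l - of_nat k) * P"
    unfolding P_def by (simp add: mult.commute)
  have "\<sigma> (\<Prod>i<Suc k. l - of_nat i) = (\<Prod>i<Suc k. l + 1 - of_nat i)"
    unfolding S.hom_prod by (simp add: S.hom_minus S.hom_of_nat \<sigma>_l)
  also have "\<dots> = (l - of_nat k) * P + of_nat (Suc k) * P"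
    unfolding P_def prod.lessThan_Suc_shift by (simp add: algebra_simps)
  finally have "\<sigma> (l_choose (Suc k)) = c * ((l - of_nat k) * P + of_nat (Suc k) * P)"
    unfolding l_choose_def c_def[symmetric] S.hom_mult unfolding c_def \<sigma>_h
    by (rule arg_cong)
  also have "\<dots> = c * ((l - of_nat k) * P) + c * of_nat (Suc k) * P"
    by (simp only: distrib_left mult.assoc)
  also have "c * of_nat (Suc k) = h (1 / fact k)"
    unfolding c_def H.hom_of_nat[of "Suc k", symmetric] H.hom_mult[symmetric]
    by (simp add: field_simps del: of_nat_Suc)
  finally show ?thesis unfolding l_choose_def c_def[symmetric] prod_Suc P_def .
qed

definition fundamental_mat :: "nat \<Rightarrow> 'k mat \<Rightarrow> 'e mat \<Rightarrow> bool" where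
  "fundamental_mat n A Z \<longleftrightarrow> Z \<in> carrier_mat n n \<and>
     (\<exists>Z' \<in> carrier_mat n n. Z * Z' = 1\<^sub>m n \<and> Z' * Z = 1\<^sub>m n) \<and>
     map_mat \<sigma> Z = map_mat h A * Z"

lemma map_mat_\<sigma>_h [simp]: "map_mat \<sigma> (map_mat h A) = map_mat h A"
  by (intro eq_matI) auto

lemma \<sigma>_jordan_block_entry:
  assumes \<sigma>_u: "\<sigma> u = h a * u" and c: "a * c' = c"
  shows "\<sigma> (u * h c' * l_choose (Suc d)) = h a * (u * h c' * l_choose (Suc d)) + u * h c * l_choose d"
proof -
  have "\<sigma> (u * h c' * l_choose (Suc d)) = h a * u * h c' * (l_choose (Suc d) + l_choose d)"
    by (simp add: S.hom_mult \<sigma>_u \<sigma>_l_choose_Suc)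
  also have "\<dots> = h a * (u * h c' * l_choose (Suc d)) + u * (h a * h c') * l_choose d"
    by (simp add: algebra_simps)
  also have "h a * h c' = h c" using c by (metis H.hom_mult)
  finally show ?thesis .
qed

lemma fundamental_mat_jordan_block:
  assumes a: "a \<noteq> 0" and u: "u * v = 1" and \<sigma>_u: "\<sigma> u = h a * u"
  shows "\<exists>Z. fundamental_mat m (jordan_block m a) Z"
proof -
  define Z where "Z = mat m m (\<lambda>(i, j).
    if i \<le> j then u * h (inverse a ^ (j - i)) * l_choose (j - i) else 0)"
  have Z: "Z \<in> carrier_mat m m" unfolding Z_def by auto
  have "map_mat \<sigma> Z = map_mat h (jordan_block m a) * Z"
  proof (rule eq_matI)
    fix i j assume "i < dim_row (map_mat h (jordan_block m a) * Z)"
      and "j < dim_col (map_mat h (jordan_block m a) * Z)"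
    then have i: "i < m" and j: "j < m" using Z by auto
    have "\<sigma> (Z $$ (i, j)) = h a * Z $$ (i, j) + (if Suc i < m then Z $$ (Suc i, j) else 0)"
    proof (cases "i < j")
      case True
      then obtain d where "j - i = Suc d" "j - Suc i = d" by (metis Suc_diff_Suc)
      then show ?thesis
        using \<sigma>_jordan_block_entry[OF \<sigma>_u, of "inverse a ^ Suc d" "inverse a ^ d" d] a i j True
        unfolding Z_def by (simp add: field_simps)
    qed (use i j \<sigma>_u in \<open>auto simp: Z_def\<close>)
    moreover have "(map_mat h (jordan_block m a) * Z) $$ (i, j) =
      h a * Z $$ (i, j) + (if Suc i < m then Z $$ (Suc i, j) else 0)"
      unfolding map_jordan_block[OF H.hom_zero H.hom_one] by (rule jordan_block_mult_index[OF Z i j])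
    ultimately show "map_mat \<sigma> Z $$ (i, j) = (map_mat h (jordan_block m a) * Z) $$ (i, j)"
      using i j Z by simp
  qed (use Z in auto)
  moreover have "det Z * v ^ m = 1"
  proof -
    have "upper_triangular Z" unfolding Z_def upper_triangular_def by auto
    then have "det Z = (\<Prod>i = 0..<m. Z $$ (i, i))"
      using Z by (simp add: det_upper_triangular prod_list_diag_prod)
    also have "\<dots> = u ^ m" unfolding Z_def by simp
    finally show ?thesis using u by (simp flip: power_mult_distrib)
  qed
  ultimately show ?thesis
    using Z inverse_mat_of_det_unit[OF Z] unfolding fundamental_mat_def by blast
qed

lemma fundamental_mat_four_block:
  assumes A1: "A1 \<in> carrier_mat n1 n1" and A2: "A2 \<in> carrier_mat n2 n2"
    and Z1: "fundamental_mat n1 A1 Z1" and Z2: "fundamental_mat n2 A2 Z2"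
  shows "fundamental_mat (n1 + n2) (four_block_mat A1 (0\<^sub>m n1 n2) (0\<^sub>m n2 n1) A2)
    (four_block_mat Z1 (0\<^sub>m n1 n2) (0\<^sub>m n2 n1) Z2)"
proof -
  from Z1 obtain Z1' where Z1c: "Z1 \<in> carrier_mat n1 n1" and Z1': "Z1' \<in> carrier_mat n1 n1"
    and "Z1 * Z1' = 1\<^sub>m n1" "Z1' * Z1 = 1\<^sub>m n1" and \<sigma>_Z1: "map_mat \<sigma> Z1 = map_mat h A1 * Z1"
    unfolding fundamental_mat_def by blast
  from Z2 obtain Z2' where Z2c: "Z2 \<in> carrier_mat n2 n2" and Z2': "Z2' \<in> carrier_mat n2 n2"
    and "Z2 * Z2' = 1\<^sub>m n2" "Z2' * Z2 = 1\<^sub>m n2" and \<sigma>_Z2: "map_mat \<sigma> Z2 = map_mat h A2 * Z2"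
    unfolding fundamental_mat_def by blast
  let ?Z = "four_block_mat Z1 (0\<^sub>m n1 n2) (0\<^sub>m n2 n1) Z2"
    and ?Z' = "four_block_mat Z1' (0\<^sub>m n1 n2) (0\<^sub>m n2 n1) Z2'"
  have "map_mat \<sigma> ?Z = four_block_mat (map_mat \<sigma> Z1) (map_mat \<sigma> (0\<^sub>m n1 n2))
      (map_mat \<sigma> (0\<^sub>m n2 n1)) (map_mat \<sigma> Z2)"
    by (rule map_four_block_mat[OF Z1c zero_carrier_mat zero_carrier_mat Z2c])
  also have "\<dots> = four_block_mat (map_mat h A1 * Z1) (0\<^sub>m n1 n2) (0\<^sub>m n2 n1) (map_mat h A2 * Z2)"
    by (simp only: map_zero_mat S.hom_zero \<sigma>_Z1 \<sigma>_Z2)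
  also have "\<dots> = four_block_mat (map_mat h A1) (0\<^sub>m n1 n2) (0\<^sub>m n2 n1) (map_mat h A2) * ?Z"
    by (rule mult_four_block_diag_mat[symmetric]) (use A1 A2 Z1c Z2c in auto)
  also have "four_block_mat (map_mat h A1) (0\<^sub>m n1 n2) (0\<^sub>m n2 n1) (map_mat h A2) =
      map_mat h (four_block_mat A1 (0\<^sub>m n1 n2) (0\<^sub>m n2 n1) A2)"
    by (simp only: map_four_block_mat[OF A1 zero_carrier_mat zero_carrier_mat A2]
        map_zero_mat H.hom_zero)
  finally have \<sigma>_Z: "map_mat \<sigma> ?Z = map_mat h (four_block_mat A1 (0\<^sub>m n1 n2) (0\<^sub>m n2 n1) A2) * ?Z" .
  have "?Z * ?Z' = 1\<^sub>m (n1 + n2)"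
    using mult_four_block_diag_mat[OF Z1c Z1' Z2c Z2'] \<open>Z1 * Z1' = 1\<^sub>m n1\<close> \<open>Z2 * Z2' = 1\<^sub>m n2\<close>
    by simp
  moreover have "?Z' * ?Z = 1\<^sub>m (n1 + n2)"
    using mult_four_block_diag_mat[OF Z1' Z1c Z2' Z2c] \<open>Z1' * Z1 = 1\<^sub>m n1\<close> \<open>Z2' * Z2 = 1\<^sub>m n2\<close>
    by simp
  moreover have "?Z \<in> carrier_mat (n1 + n2) (n1 + n2)" "?Z' \<in> carrier_mat (n1 + n2) (n1 + n2)"
    using Z1c Z2c Z1' Z2' by auto
  ultimately show ?thesis using \<sigma>_Z unfolding fundamental_mat_def by blast
qed

lemma fundamental_mat_jordan_matrix:
  assumes "\<forall>(m, a) \<in> set n_as. a \<noteq> 0 \<and> (\<exists>u v. u * v = 1 \<and> \<sigma> u = h a * u)"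
  shows "\<exists>Z. fundamental_mat (sum_list (map fst n_as)) (jordan_matrix n_as) Z"
  using assms
proof (induction n_as)
  case Nil
  have "fundamental_mat 0 (jordan_matrix []) (1\<^sub>m 0)"
    unfolding fundamental_mat_def by auto
  then show ?case by auto
next
  case (Cons ma n_as)
  obtain m a where ma: "ma = (m, a)" by force
  with Cons.prems obtain u v where "a \<noteq> 0" "u * v = 1" "\<sigma> u = h a * u" by auto
  then obtain Z1 where "fundamental_mat m (jordan_block m a) Z1"
    using fundamental_mat_jordan_block by blast
  moreover obtain Z2 where "fundamental_mat (sum_list (map fst n_as)) (jordan_matrix n_as) Z2"
    using Cons by auto
  ultimately have "fundamental_mat (m + sum_list (map fst n_as))
      (four_block_mat (jordan_block m a) (0\<^sub>m m (sum_list (map fst n_as)))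
        (0\<^sub>m (sum_list (map fst n_as)) m) (jordan_matrix n_as))
      (four_block_mat Z1 (0\<^sub>m m (sum_list (map fst n_as))) (0\<^sub>m (sum_list (map fst n_as)) m) Z2)"
    by (intro fundamental_mat_four_block jordan_block_carrier jordan_matrix_carrier)
  then show ?case unfolding ma jordan_matrix_Cons by auto
qed

lemma fundamental_mat_similar:
  assumes A: "A \<in> carrier_mat n n" and wit: "similar_mat_wit A B P Q"
    and Z: "fundamental_mat n B Z"
  shows "fundamental_mat n A (map_mat h P * Z)"
proof -
  from similar_mat_witD2[OF A wit] have B: "B \<in> carrier_mat n n" and P: "P \<in> carrier_mat n n"
    and Q: "Q \<in> carrier_mat n n" and PQ: "P * Q = 1\<^sub>m n" and QP: "Q * P = 1\<^sub>m n"
    and A_eq: "A = P * B * Q" by auto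
  from Z obtain Z' where Zc: "Z \<in> carrier_mat n n" and Z': "Z' \<in> carrier_mat n n"
    and ZZ': "Z * Z' = 1\<^sub>m n" and Z'Z: "Z' * Z = 1\<^sub>m n" and \<sigma>_Z: "map_mat \<sigma> Z = map_mat h B * Z"
    unfolding fundamental_mat_def by blast
  define hP hQ where "hP = map_mat h P" and "hQ = map_mat h Q"
  have hP: "hP \<in> carrier_mat n n" and hQ: "hQ \<in> carrier_mat n n" unfolding hP_def hQ_def using P Q by auto
  have hA: "map_mat h A = hP * map_mat h B * hQ"
    unfolding A_eq hP_def hQ_def using P B Q by (simp add: H.mat_hom_mult[of _ n n _ n])
  have hPQ: "hP * hQ = 1\<^sub>m n" and hQP: "hQ * hP = 1\<^sub>m n"
    unfolding hP_def hQ_def using P Q PQ QP by (simp_all add: H.mat_hom_one flip: H.mat_hom_mult)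
  have "hP * Z * (Z' * hQ) = 1\<^sub>m n" by (rule mult_mat_right_inverse[OF hP hQ Zc Z' hPQ ZZ'])
  moreover have "Z' * hQ * (hP * Z) = 1\<^sub>m n" by (rule mult_mat_right_inverse[OF Z' Zc hQ hP Z'Z hQP])
  moreover have "map_mat \<sigma> (hP * Z) = map_mat h A * (hP * Z)"
  proof -
    have hPB: "hP * map_mat h B \<in> carrier_mat n n" using hP B by auto
    have "map_mat h A * (hP * Z) = hP * map_mat h B * (hQ * (hP * Z))"
      unfolding hA by (rule assoc_mult_mat[OF hPB hQ]) (use hP Zc in auto)
    also have "hQ * (hP * Z) = Z" using Zc by (simp add: hQP flip: assoc_mult_mat[OF hQ hP Zc])
    also have "hP * map_mat h B * Z = hP * (map_mat h B * Z)"
      by (rule assoc_mult_mat[OF hP _ Zc]) (use B in auto)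
    also have "\<dots> = map_mat \<sigma> (hP * Z)"
      using hP Zc by (simp add: S.mat_hom_mult \<sigma>_Z hP_def)
    finally show ?thesis ..
  qed
  ultimately show ?thesis using hP Zc Z' hQ unfolding fundamental_mat_def
    by (intro conjI bexI[of _ "Z' * hQ"]) (auto simp: hP_def)
qed

lemma fundamental_mat_exists:
  assumes ac: "alg_closed TYPE('k)" and N: "N \<in> carrier_mat n n" and det: "det N \<noteq> 0"
    and units: "\<And>a. a \<noteq> 0 \<Longrightarrow> \<exists>u v. u * v = 1 \<and> \<sigma> u = h a * u"
  shows "\<exists>X. fundamental_mat n N X"
proof -
  obtain B where B: "B \<in> carrier_mat n n" "upper_triangular B" and "similar_mat N B"
    using alg_closed_triangularizable[OF ac N] by blast
  define n_as where "n_as = triangular_to_jnf_vector B"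
  have "jordan_nf B n_as" unfolding n_as_def by (rule triangular_to_jnf_vector[OF B])
  then have jnf: "jordan_nf N n_as"
    using similar_mat_trans[OF \<open>similar_mat N B\<close>] unfolding jordan_nf_def by (elim conjE) simp
  then obtain P Q where wit: "similar_mat_wit N (jordan_matrix n_as) P Q"
    unfolding jordan_nf_def similar_mat_def by (elim conjE exE)
  have "sum_list (map fst n_as) = n"
    using carrier_matD(1)[OF similar_mat_witD2(5)[OF N wit]] by (simp only: jordan_matrix_dim)
  moreover have "\<forall>(m, a) \<in> set n_as. a \<noteq> 0 \<and> (\<exists>u v. u * v = 1 \<and> \<sigma> u = h a * u)"
    using jordan_nf_eigenvalue_nonzero[OF N det jnf] units by auto
  ultimately obtain Z where "fundamental_mat n (jordan_matrix n_as) Z"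
    using fundamental_mat_jordan_matrix[of n_as] by auto
  from fundamental_mat_similar[OF N wit this] show ?thesis ..
qed

lemma fundamental_mat_cols_fixed:
  assumes X: "fundamental_mat n N X" and M: "M \<in> carrier_mat n n" and N: "N \<in> carrier_mat n n"
    and MN: "M * N = 1\<^sub>m n"
  shows "\<forall>b \<in> set (cols X). map_mat h M *\<^sub>v map_vec \<sigma> b = b"
proof
  fix b assume "b \<in> set (cols X)"
  moreover from X have Xc: "X \<in> carrier_mat n n" and \<sigma>_X: "map_mat \<sigma> X = map_mat h N * X"
    unfolding fundamental_mat_def by auto
  ultimately obtain j where j: "j < n" and b: "b = col X j" by (auto simp: cols_def)
  have "map_mat h M * map_mat \<sigma> X = map_mat h (M * N) * X"
    unfolding \<sigma>_X H.mat_hom_mult[OF M N] using M N Xc by (simp add: assoc_mult_mat[of _ n n _ n])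
  also have "\<dots> = X" using Xc by (simp add: MN H.mat_hom_one)
  finally have "map_mat h M * map_mat \<sigma> X = X" .
  then show "map_mat h M *\<^sub>v map_vec \<sigma> b = b"
    using col_mult2[of "map_mat h M" n n "map_mat \<sigma> X" n j] M Xc j b by simp
qed

lemma fixed_basis_exists:
  assumes ac: "alg_closed TYPE('k)" and M: "M \<in> carrier_mat n n" and inv: "invertible_mat M"
    and units: "\<And>a. a \<noteq> 0 \<Longrightarrow> \<exists>u v. u * v = 1 \<and> \<sigma> u = h a * u"
  shows "\<exists>bs. is_basis_vecs n bs \<and> (\<forall>b \<in> set bs. map_mat h M *\<^sub>v map_vec \<sigma> b = b)"
proof -
  obtain N where N: "N \<in> carrier_mat n n" and MN: "M * N = 1\<^sub>m n"
    using invertible_mat_inverseE[OF M inv] by blast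
  have "det M * det N = 1" using det_mult[OF M N] MN by simp
  then have "det N \<noteq> 0" by (metis mult_zero_right zero_neq_one)
  then obtain X where X: "fundamental_mat n N X"
    using fundamental_mat_exists[OF ac N _ units] by blast
  then obtain Y where "X \<in> carrier_mat n n" "Y \<in> carrier_mat n n" "X * Y = 1\<^sub>m n" "Y * X = 1\<^sub>m n"
    unfolding fundamental_mat_def by blast
  then have "is_basis_vecs n (cols X)" by (rule is_basis_vecs_cols)
  with fundamental_mat_cols_fixed[OF X M N MN] show ?thesis by blast
qed

end

lemma comm_ring_hom_of_ring_hom_fun: "ring_hom_fun f \<Longrightarrow> comm_ring_hom f"
  by unfold_locales (auto simp: ring_hom_fun_def)

lemma log_difference_ring_of_EA_pres:
  fixes cK :: "'k::field_char_0 \<Rightarrow> 'a::comm_ring_1" and iA :: "'a \<Rightarrow> 'e::comm_ring_1"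
  assumes "laurent_subring cK T" and "EA_pres cK T R iA tt l" and "sigma_char cK iA tt l \<gamma> \<sigma>"
  shows "log_difference_ring (iA \<circ> cK) \<sigma> l"
proof -
  from assms(1) have "ring_hom_fun cK" unfolding laurent_subring_def by (rule conjunct1)
  moreover from assms(2) have "ring_hom_fun iA" unfolding EA_pres_def by (rule conjunct1)
  ultimately have h: "ring_hom_fun (iA \<circ> cK)" unfolding ring_hom_fun_def by simp
  from assms(3) have \<sigma>: "ring_hom_fun \<sigma>" and \<sigma>_iA: "\<And>f. \<sigma> (iA f) = iA f" and \<sigma>_l: "\<sigma> l = l + 1"
    unfolding sigma_char_def by blast+
  show ?thesis
    by (intro log_difference_ring.intro log_difference_ring_axioms.intro comm_ring_hom_of_ring_hom_fun)
      (simp_all add: h \<sigma> \<sigma>_iA \<sigma>_l)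
qed

lemma sigma_char_eigenunit:
  fixes cK :: "'k::field_char_0 \<Rightarrow> 'a::comm_ring_1" and iA :: "'a \<Rightarrow> 'e::comm_ring_1"
  assumes "gamma_char \<gamma>" and "EA_pres cK T R iA tt l" and "sigma_char cK iA tt l \<gamma> \<sigma>"
    and a: "a \<noteq> 0"
  shows "\<exists>u v. u * v = 1 \<and> \<sigma> u = (iA \<circ> cK) a * u"
proof -
  have "\<forall>b. b \<noteq> 0 \<longrightarrow> (\<exists>c. \<gamma> c = b)" using assms(1) unfolding gamma_char_def by (elim conjE)
  then obtain c where c: "\<gamma> c = a" using a by blast
  from assms(2) have "\<And>a b. tt (a + b) = tt a * tt b" and "tt 0 = 1" unfolding EA_pres_def by blast+
  then have "tt c * tt (- c) = 1" by (metis add.right_inverse)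
  moreover from assms(3) have "\<sigma> (tt c) = iA (cK (\<gamma> c)) * tt c" unfolding sigma_char_def by blast
  ultimately show ?thesis by (intro exI[of _ "tt c"] exI[of _ "tt (- c)"]) (simp add: c)
qed

theorem mainTheorem7:
  fixes cK :: "'k::field_char_0 \<Rightarrow> 'a::comm_ring_1" and T :: 'a and D :: "'a \<Rightarrow> 'a"
    and R :: "'k set" and \<gamma> :: "'k \<Rightarrow> 'k"
    and iA :: "'a \<Rightarrow> 'e::comm_ring_1" and tt :: "'k \<Rightarrow> 'e" and l :: 'e and \<sigma> :: "'e \<Rightarrow> 'e"
    and n :: nat and M :: "'k mat"
  assumes "alg_closed TYPE('k)"
    and "laurent_subring cK T"
    and "extends_t_ddt cK T D"
    and "reps_mod_Z R"
    and "gamma_char \<gamma>"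
    and "EA_pres cK T R iA tt l"
    and "sigma_char cK iA tt l \<gamma> \<sigma>"
    and "M \<in> carrier_mat n n" and "invertible_mat M"
  shows "\<exists>bs. is_basis_vecs n bs \<and>
           (\<forall>b\<in>set bs. map_mat (iA \<circ> cK) M *\<^sub>v map_vec \<sigma> b = b)"
proof -
  interpret log_difference_ring "iA \<circ> cK" \<sigma> l
    by (rule log_difference_ring_of_EA_pres[OF assms(2,6,7)])
  show ?thesis
    by (rule fixed_basis_exists[OF assms(1,8,9) sigma_char_eigenunit[OF assms(5,6,7)]])
qed

end
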